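(* Let $n$ be the number of categories and $\epsilon\in(0,1)$. Let $\widehat{P}$ be an empirical distribution of $p$ samples and $\widehat{Q}$ an empirical distribution of $p'$ samples, both over the same $n$ categories. Let $$\bar{\mathcal{Q}}=\left\{Q\in\mathbb{S}^n:\ D(\widehat{Q}\,\|\,Q)\le\frac{1}{p'}\log\left(\frac1\epsilon\right)+\frac{2n}{p'}\log(p'+1)\right\},$$ and let $D^*_0=\min_{Q\in\bar{\mathcal{Q}}}D(\widehat{P}\,\|\,Q)$. If $$D^*_0\ \ge\ \frac1p\log\left(\frac1\epsilon\right)+\frac{2n}{p}\log(p+1),$$ then there is no distribution $Q$ on the $n$ categories such that simultaneously (1) $\widehat{Q}$ is typical at significance level $\epsilon$ with respect to $\{Q\}$ (as an empirical distribution of $p'$ samples), and (2) $\widehat{P}$ is typical at significance level $\epsilon$ with respect to $\{Q\}$ (as an empirical distribution of $p$ samples).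
   Context: $\mathbb{S}^n$ is the probability simplex in $\mathbb{R}^n$, and $D(P\|Q)=\sum_iP_i\log(P_i/Q_i)$ is the Kullback–Leibler divergence. An empirical distribution of $m$ samples over $n$ categories is a vector $\frac1m(m_1,\dots,m_n)$ with nonnegative integers $m_i$ summing to $m$. For a distribution $Q$ and a set $\mathcal{S}$ of empirical distributions of $m$ samples, $\mathbb{P}_Q(\mathcal{S})$ is the probability that $m$ i.i.d. draws from $Q$ have empirical distribution in $\mathcal{S}$. Typical: let $\widehat{P}^1,\widehat{P}^2,\dots$ be an ordering of all empirical distributions of $m$ samples over the $n$ categories with $\mathbb{P}_Q(\widehat{P}^1)\le\mathbb{P}_Q(\widehat{P}^2)\le\cdots$; an empirical distribution $\widehat{P}^\ell$ is typical at significance level $\epsilon$ with respect to a set $\mathcal{Q}$ of distributions iff $\sup_{Q\in\mathcal{Q}}\mathbb{P}_Q(\{\widehat{P}^1,\dots,\widehat{P}^\ell\})\ge\epsilon$ for any such ordering (the ordering depending on $Q$). *)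

theory Defs
  imports "HOL-Analysis.Analysis"
begin

definition prob_simplex :: "nat \<Rightarrow> (nat \<Rightarrow> real) set" where
  "prob_simplex n = {Q. (\<forall>i<n. 0 \<le> Q i) \<and> (\<forall>i\<ge>n. Q i = 0) \<and> (\<Sum>i<n. Q i) = 1}"

text \<open>Count vectors (m_1,...,m_n) of m samples; the empirical distribution is counts / m.\<close>
definition emp_counts :: "nat \<Rightarrow> nat \<Rightarrow> (nat \<Rightarrow> nat) set" where
  "emp_counts m n = {k. (\<forall>i\<ge>n. k i = 0) \<and> (\<Sum>i<n. k i) = m}"

definition emp_dist :: "nat \<Rightarrow> (nat \<Rightarrow> nat) \<Rightarrow> (nat \<Rightarrow> real)" where
  "emp_dist m k = (\<lambda>i. real (k i) / real m)"

text \<open>KL divergence with the conventions 0 log(0/q) = 0 and p log(p/0) = +infinity (p > 0).\<close>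
definition KL :: "nat \<Rightarrow> (nat \<Rightarrow> real) \<Rightarrow> (nat \<Rightarrow> real) \<Rightarrow> ereal" where
  "KL n P Q = (\<Sum>i<n. if P i = 0 then 0 else if Q i = 0 then \<infinity>
                        else ereal (P i * ln (P i / Q i)))"

text \<open>Probability under Q (m i.i.d. draws) that the count vector equals k (multinomial).\<close>
definition mprob :: "nat \<Rightarrow> nat \<Rightarrow> (nat \<Rightarrow> real) \<Rightarrow> (nat \<Rightarrow> nat) \<Rightarrow> real" where
  "mprob m n Q k = fact m / (\<Prod>i<n. fact (k i)) * (\<Prod>i<n. Q i ^ k i)"

definition prob_ordering :: "nat \<Rightarrow> nat \<Rightarrow> (nat \<Rightarrow> real) \<Rightarrow> (nat \<Rightarrow> nat \<Rightarrow> nat) \<Rightarrow> bool" where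
  "prob_ordering m n Q \<sigma> \<longleftrightarrow>
     bij_betw \<sigma> {..<card (emp_counts m n)} (emp_counts m n) \<and>
     (\<forall>i j. i \<le> j \<and> j < card (emp_counts m n) \<longrightarrow> mprob m n Q (\<sigma> i) \<le> mprob m n Q (\<sigma> j))"

text \<open>P_Q({sigma 0, ..., sigma l}) where sigma l = k.\<close>
definition prefix_mass :: "nat \<Rightarrow> nat \<Rightarrow> (nat \<Rightarrow> real) \<Rightarrow> (nat \<Rightarrow> nat \<Rightarrow> nat) \<Rightarrow> (nat \<Rightarrow> nat) \<Rightarrow> real" where
  "prefix_mass m n Q \<sigma> k =
     (\<Sum>j\<in>{..the_inv_into {..<card (emp_counts m n)} \<sigma> k}. mprob m n Q (\<sigma> j))"

definition typical :: "nat \<Rightarrow> nat \<Rightarrow> (nat \<Rightarrow> real) set \<Rightarrow> real \<Rightarrow> (nat \<Rightarrow> nat) \<Rightarrow> bool" where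
  "typical m n QQ \<epsilon> k \<longleftrightarrow>
     (\<forall>\<sigma>. (\<forall>Q\<in>QQ. prob_ordering m n Q (\<sigma> Q)) \<longrightarrow>
           (SUP Q\<in>QQ. prefix_mass m n Q (\<sigma> Q) k) \<ge> \<epsilon>)"

end

theory Submission
  imports Defs
begin

text \<open>Method of types. A single type class of m samples has probability at most
  exp(-m D(P || Q)) under Q, where P is its empirical distribution, and there are at most
  (m+1)^n type classes. If the class is typical for Q, the at most (m+1)^n classes no more
  likely than it carry mass at least \<epsilon>, so D(P || Q) \<le> (ln(1/\<epsilon>) + n ln(m+1))/m.
  Applied to the p'-sample type this puts Q into the confidence set (even with n in place
  of 2n); applied to the p-sample type it bounds the minimal divergence by
  (ln(1/\<epsilon>) + n ln(p+1))/p, strictly below the assumed lower bound.\<close>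

lemma binomial_mult_powers_le_power:
  fixes a b :: nat
  shows "((a + b) choose a) * a ^ a * b ^ b \<le> (a + b) ^ (a + b)"
proof -
  have "((a + b) choose a) * a ^ a * b ^ (a + b - a)
          \<le> (\<Sum>j\<le>a + b. ((a + b) choose j) * a ^ j * b ^ (a + b - j))"
    by (rule member_le_sum[where f = "\<lambda>j. ((a + b) choose j) * a ^ j * b ^ (a + b - j)"]) auto
  also have "\<dots> = (a + b) ^ (a + b)"
    using binomial_ring[of a b "a + b"] by simp
  finally show ?thesis by simp
qed

lemma fact_sum_mult_prod_self_powers_le:
  fixes k :: "'a \<Rightarrow> nat"
  assumes "finite A"
  shows "fact (\<Sum>i\<in>A. k i) * (\<Prod>i\<in>A. k i ^ k i)
           \<le> (\<Sum>i\<in>A. k i) ^ (\<Sum>i\<in>A. k i) * (\<Prod>i\<in>A. fact (k i) :: nat)"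
  using assms
proof (induction A rule: finite_induct)
  case empty
  then show ?case by simp
next
  case (insert a A)
  define s where "s = (\<Sum>i\<in>A. k i)"
  define c where "c = k a"
  define P where "P = (\<Prod>i\<in>A. k i ^ k i)"
  define F where "F = (\<Prod>i\<in>A. fact (k i) :: nat)"
  have IH: "fact s * P \<le> s ^ s * F"
    using insert.IH unfolding s_def P_def F_def .
  have fact_sum: "fact (s + c) = ((s + c) choose c) * fact s * (fact c :: nat)"
    using binomial_fact_lemma[of c "s + c"] by (simp add: algebra_simps)
  have "fact (s + c) * (c ^ c * P) = (((s + c) choose c) * fact c * c ^ c) * (fact s * P)"
    unfolding fact_sum by (simp only: ac_simps)
  also have "\<dots> \<le> (((s + c) choose c) * fact c * c ^ c) * (s ^ s * F)"
    using IH by (rule mult_left_mono) simp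
  also have "\<dots> = (((s + c) choose c) * c ^ c * s ^ s) * (fact c * F)"
    by (simp add: algebra_simps)
  also have "\<dots> \<le> (s + c) ^ (s + c) * (fact c * F)"
    using binomial_mult_powers_le_power[of c s]
    by (intro mult_right_mono) (simp_all add: add.commute)
  finally show ?case
    using insert.hyps by (simp add: s_def c_def P_def F_def add.commute)
qed

lemma restrict_emp_counts_subset_PiE:
  "(\<lambda>k. restrict k {..<n}) ` emp_counts m n \<subseteq> PiE {..<n} (\<lambda>_. {..m})"
proof (rule image_subsetI)
  fix k assume k: "k \<in> emp_counts m n"
  have "k i \<le> m" if "i < n" for i
  proof -
    have "k i \<le> (\<Sum>j<n. k j)"
      using \<open>i < n\<close> by (intro member_le_sum) auto
    then show ?thesis
      using k by (simp add: emp_counts_def)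
  qed
  then show "restrict k {..<n} \<in> PiE {..<n} (\<lambda>_. {..m})"
    by auto
qed

lemma inj_on_restrict_emp_counts: "inj_on (\<lambda>k. restrict k {..<n}) (emp_counts m n)"
proof (rule inj_onI)
  fix k l assume k: "k \<in> emp_counts m n" and l: "l \<in> emp_counts m n"
    and eq: "restrict k {..<n} = restrict l {..<n}"
  show "k = l"
  proof
    fix i show "k i = l i"
      using fun_cong[OF eq, of i] k l by (cases "i < n") (auto simp: emp_counts_def)
  qed
qed

lemma finite_emp_counts: "finite (emp_counts m n)"
proof -
  have "finite ((\<lambda>k. restrict k {..<n}) ` emp_counts m n)"
    by (rule finite_subset[OF restrict_emp_counts_subset_PiE]) (simp add: finite_PiE)
  then show ?thesis
    by (rule finite_imageD[OF _ inj_on_restrict_emp_counts])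
qed

lemma card_emp_counts_le: "card (emp_counts m n) \<le> (m + 1) ^ n"
proof -
  have "card (emp_counts m n) = card ((\<lambda>k. restrict k {..<n}) ` emp_counts m n)"
    using card_image[OF inj_on_restrict_emp_counts] by simp
  also have "\<dots> \<le> card (PiE {..<n} (\<lambda>_. {..m}))"
    by (rule card_mono[OF _ restrict_emp_counts_subset_PiE]) (auto intro: finite_PiE)
  also have "\<dots> = (m + 1) ^ n"
    by (simp add: card_PiE)
  finally show ?thesis .
qed

lemma prob_ordering_exists: "\<exists>\<sigma>. prob_ordering m n Q \<sigma>"
proof -
  obtain xs where xs: "distinct xs" "set xs = emp_counts m n"
    using finite_distinct_list[OF finite_emp_counts] by blast
  define ys where "ys = sort_key (mprob m n Q) xs"
  have ys: "distinct ys" "set ys = emp_counts m n"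
    using xs by (auto simp: ys_def)
  then have len: "length ys = card (emp_counts m n)"
    using distinct_card by fastforce
  have sorted: "sorted (map (mprob m n Q) ys)"
    unfolding ys_def by (rule sorted_sort_key)
  have "prob_ordering m n Q ((!) ys)"
    unfolding prob_ordering_def
  proof (intro conjI allI impI)
    show "bij_betw ((!) ys) {..<card (emp_counts m n)} (emp_counts m n)"
      by (rule bij_betw_nth) (use ys len in auto)
  next
    fix i j assume "i \<le> j \<and> j < card (emp_counts m n)"
    then show "mprob m n Q (ys ! i) \<le> mprob m n Q (ys ! j)"
      using sorted_nth_mono[OF sorted, of i j] len by simp
  qed
  then show ?thesis by blast
qed

lemma mprob_nonneg:
  assumes "Q \<in> prob_simplex n"
  shows "0 \<le> mprob m n Q k"
  using assms unfolding mprob_def prob_simplex_def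
  by (intro mult_nonneg_nonneg divide_nonneg_nonneg prod_nonneg) auto

lemma prefix_mass_le_card_mult_mprob:
  assumes Q: "Q \<in> prob_simplex n" and \<sigma>: "prob_ordering m n Q \<sigma>" and k: "k \<in> emp_counts m n"
  shows "prefix_mass m n Q \<sigma> k \<le> real (card (emp_counts m n)) * mprob m n Q k"
proof -
  define N where "N = card (emp_counts m n)"
  have bij: "bij_betw \<sigma> {..<N} (emp_counts m n)"
    and mono: "\<And>i j. i \<le> j \<Longrightarrow> j < N \<Longrightarrow> mprob m n Q (\<sigma> i) \<le> mprob m n Q (\<sigma> j)"
    using \<sigma> by (simp_all add: prob_ordering_def N_def)
  define pos where "pos = the_inv_into {..<N} \<sigma> k"
  have inj: "inj_on \<sigma> {..<N}" and k_img: "k \<in> \<sigma> ` {..<N}"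
    using bij k by (auto simp: bij_betw_def)
  have pos: "pos < N" "\<sigma> pos = k"
    using the_inv_into_into[OF inj k_img, of "{..<N}"] f_the_inv_into_f[OF inj k_img]
    by (simp_all add: pos_def)
  have "prefix_mass m n Q \<sigma> k = (\<Sum>j\<le>pos. mprob m n Q (\<sigma> j))"
    by (simp add: prefix_mass_def pos_def N_def)
  also have "\<dots> \<le> (\<Sum>j\<le>pos. mprob m n Q k)"
    by (rule sum_mono) (use mono[of _ pos] pos in auto)
  also have "\<dots> = real (Suc pos) * mprob m n Q k"
    by simp
  also have "\<dots> \<le> real N * mprob m n Q k"
    using pos mprob_nonneg[OF Q] by (intro mult_right_mono) auto
  finally show ?thesis
    unfolding N_def .
qed

lemma typical_singleton_imp_mprob_ge:
  assumes Q: "Q \<in> prob_simplex n" and k: "k \<in> emp_counts m n"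
    and is_typical: "typical m n {Q} \<epsilon> k"
  shows "\<epsilon> \<le> (real m + 1) ^ n * mprob m n Q k"
proof -
  obtain \<sigma> where \<sigma>: "prob_ordering m n Q \<sigma>"
    using prob_ordering_exists by blast
  have "\<epsilon> \<le> prefix_mass m n Q \<sigma> k"
    using is_typical \<sigma> unfolding typical_def by (auto dest: spec[of _ "\<lambda>_. \<sigma>"])
  also have "\<dots> \<le> real (card (emp_counts m n)) * mprob m n Q k"
    by (rule prefix_mass_le_card_mult_mprob[OF Q \<sigma> k])
  also have "\<dots> \<le> real ((m + 1) ^ n) * mprob m n Q k"
    using of_nat_mono[OF card_emp_counts_le] mprob_nonneg[OF Q] by (rule mult_right_mono)
  finally show ?thesis
    by (simp add: add.commute)
qed

lemma mprob_le_prod_powers: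
  assumes Q: "Q \<in> prob_simplex n" and k: "k \<in> emp_counts m n"
  shows "mprob m n Q k \<le> (\<Prod>i<n. (real m * Q i / real (k i)) ^ k i)"
proof -
  have sum_k: "(\<Sum>i<n. k i) = m"
    using k by (simp add: emp_counts_def)
  have "real (fact m * (\<Prod>i<n. k i ^ k i)) \<le> real (m ^ m * (\<Prod>i<n. fact (k i)))"
    using fact_sum_mult_prod_self_powers_le[of "{..<n}" k] sum_k by (simp only: of_nat_le_iff) simp
  moreover have "0 < (\<Prod>i<n. real (k i) ^ k i)" "0 < (\<Prod>i<n. fact (k i) :: real)"
    by (auto intro!: prod_pos simp: zero_less_power_eq)
  ultimately have multinomial:
    "(fact m :: real) / (\<Prod>i<n. fact (k i)) \<le> real m ^ m / (\<Prod>i<n. real (k i) ^ k i)"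
    by (simp add: of_nat_prod divide_simps mult.commute)
  have "mprob m n Q k \<le> real m ^ m / (\<Prod>i<n. real (k i) ^ k i) * (\<Prod>i<n. Q i ^ k i)"
    unfolding mprob_def
    using Q by (intro mult_right_mono[OF multinomial] prod_nonneg) (auto simp: prob_simplex_def)
  also have "real m ^ m = (\<Prod>i<n. real m ^ k i)"
    using power_sum[of "real m" k "{..<n}"] sum_k by simp
  finally show ?thesis
    by (simp add: power_divide power_mult_distrib prod.distrib prod_dividef)
qed

lemma mprob_pos_imp_support:
  assumes "0 < mprob m n Q k" and "i < n" and "k i \<noteq> 0"
  shows "Q i \<noteq> 0"
proof
  assume "Q i = 0"
  then have "(\<Prod>i<n. Q i ^ k i) = 0"
    using assms(2,3) by (auto simp: prod_zero_iff)
  then show False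
    using assms(1) unfolding mprob_def by (simp only: mult_zero_right less_irrefl)
qed

lemma KL_eq_ereal_sum:
  assumes "\<And>i. i < n \<Longrightarrow> P i \<noteq> 0 \<Longrightarrow> Q i \<noteq> 0"
  shows "KL n P Q = ereal (\<Sum>i<n. P i * ln (P i / Q i))"
proof -
  have "KL n P Q = (\<Sum>i<n. ereal (P i * ln (P i / Q i)))"
    unfolding KL_def using assms by (intro sum.cong) auto
  then show ?thesis by simp
qed

lemma prod_powers_eq_exp_KL_sum:
  assumes m: "0 < m" and support: "\<And>i. i < n \<Longrightarrow> k i \<noteq> 0 \<Longrightarrow> 0 < Q i"
  shows "(\<Prod>i<n. (real m * Q i / real (k i)) ^ k i)
           = exp (- real m * (\<Sum>i<n. emp_dist m k i * ln (emp_dist m k i / Q i)))"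
proof -
  have "(real m * Q i / real (k i)) ^ k i
          = exp (- real m * (emp_dist m k i * ln (emp_dist m k i / Q i)))" if "i < n" for i
  proof (cases "k i = 0")
    case True
    then show ?thesis by (simp add: emp_dist_def)
  next
    case False
    define x where "x = real m * Q i / real (k i)"
    have x: "0 < x"
      using support[OF \<open>i < n\<close> False] m False by (simp add: x_def)
    have "emp_dist m k i / Q i = inverse x"
      by (simp add: emp_dist_def x_def field_simps)
    then have "- real m * (emp_dist m k i * ln (emp_dist m k i / Q i)) = real (k i) * ln x"
      using m x by (simp add: emp_dist_def ln_inverse)
    then show ?thesis
      using x by (simp add: x_def[symmetric] exp_of_nat_mult)
  qed
  then show ?thesis
    by (simp add: exp_sum[symmetric] sum_distrib_left)
qed

lemma typical_singleton_imp_KL_le: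
  assumes Q: "Q \<in> prob_simplex n" and k: "k \<in> emp_counts m n" and m: "0 < m"
    and \<epsilon>: "0 < \<epsilon>" and is_typical: "typical m n {Q} \<epsilon> k"
  shows "KL n (emp_dist m k) Q
           \<le> ereal (1 / real m * ln (1 / \<epsilon>) + real n / real m * ln (real m + 1))"
proof -
  define D where "D = (\<Sum>i<n. emp_dist m k i * ln (emp_dist m k i / Q i))"
  have mass: "\<epsilon> \<le> (real m + 1) ^ n * mprob m n Q k"
    using typical_singleton_imp_mprob_ge[OF Q k is_typical] .
  then have "mprob m n Q k \<noteq> 0"
    using \<epsilon> by auto
  then have mprob_pos: "0 < mprob m n Q k"
    using mprob_nonneg[OF Q] by (simp add: less_le)
  have support: "0 < Q i" if "i < n" "k i \<noteq> 0" for i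
    using mprob_pos_imp_support[OF mprob_pos that] Q that(1)
    by (auto simp: prob_simplex_def less_le)
  have "mprob m n Q k \<le> (\<Prod>i<n. (real m * Q i / real (k i)) ^ k i)"
    by (rule mprob_le_prod_powers[OF Q k])
  also have "\<dots> = exp (- real m * D)"
    unfolding D_def using support by (rule prod_powers_eq_exp_KL_sum[OF m])
  finally have "\<epsilon> \<le> (real m + 1) ^ n * exp (- real m * D)"
    by (rule order_trans[OF mass mult_left_mono]) simp
  then have "ln \<epsilon> \<le> ln ((real m + 1) ^ n * exp (- real m * D))"
    using \<epsilon> by simp
  also have "\<dots> = real n * ln (real m + 1) - real m * D"
    by (simp add: ln_mult ln_realpow)
  finally have "real m * D \<le> ln (1 / \<epsilon>) + real n * ln (real m + 1)"
    using \<epsilon> by (simp add: ln_div)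
  then have "D \<le> 1 / real m * ln (1 / \<epsilon>) + real n / real m * ln (real m + 1)"
    using m by (simp add: pos_le_divide_eq add_divide_distrib[symmetric] mult.commute)
  moreover have "KL n (emp_dist m k) Q = ereal D"
    unfolding D_def using support by (intro KL_eq_ereal_sum) (force simp: emp_dist_def)
  ultimately show ?thesis
    by simp
qed

theorem proposition2:
  fixes n p p' :: nat and \<epsilon> :: real and kP kQ :: "nat \<Rightarrow> nat"
  assumes "0 < \<epsilon>" and "\<epsilon> < 1"
    and "0 < p" and "0 < p'"
    and "kP \<in> emp_counts p n" and "kQ \<in> emp_counts p' n"
    and "(INF Q\<in>{Q\<in>prob_simplex n. KL n (emp_dist p' kQ) Q
                  \<le> ereal (1 / real p' * ln (1 / \<epsilon>) + 2 * real n / real p' * ln (real p' + 1))}.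
            KL n (emp_dist p kP) Q)
         \<ge> ereal (1 / real p * ln (1 / \<epsilon>) + 2 * real n / real p * ln (real p + 1))"
  shows "\<not> (\<exists>Q\<in>prob_simplex n. typical p' n {Q} \<epsilon> kQ \<and> typical p n {Q} \<epsilon> kP)"
proof
  assume "\<exists>Q\<in>prob_simplex n. typical p' n {Q} \<epsilon> kQ \<and> typical p n {Q} \<epsilon> kP"
  then obtain Q where Q: "Q \<in> prob_simplex n"
    and typical_Q: "typical p' n {Q} \<epsilon> kQ" and typical_P: "typical p n {Q} \<epsilon> kP"
    by blast
  define r where "r m d = 1 / real m * ln (1 / \<epsilon>) + d / real m * ln (real m + 1)" for m :: nat and d
  have n: "0 < n"
    using assms(3,5) by (cases n) (auto simp: emp_counts_def)
  have r_less: "r m (real n) < r m (2 * real n)" if "0 < m" for m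
    using n that by (simp add: r_def divide_strict_right_mono ln_gt_zero)
  have "KL n (emp_dist p' kQ) Q \<le> ereal (r p' (real n))"
    using typical_singleton_imp_KL_le[OF Q assms(6,4,1) typical_Q] unfolding r_def by simp
  also have "\<dots> \<le> ereal (r p' (2 * real n))"
    using r_less[OF assms(4)] by simp
  finally have "(INF Q\<in>{Q\<in>prob_simplex n. KL n (emp_dist p' kQ) Q \<le> ereal (r p' (2 * real n))}.
                KL n (emp_dist p kP) Q) \<le> KL n (emp_dist p kP) Q"
    using Q by (intro INF_lower) simp
  also have "\<dots> \<le> ereal (r p (real n))"
    using typical_singleton_imp_KL_le[OF Q assms(5,3,1) typical_P] unfolding r_def by simp
  also have "\<dots> < ereal (r p (2 * real n))"
    using r_less[OF assms(3)] by simp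
  finally show False
    using assms(7) unfolding r_def by simp
qed

end
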